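(* Let $n\ge 2$, let $\mathcal{Y}=\{C^{(1)},\dots,C^{(n)}\}$ be a set of classes, let $E$ be a set of ordered pairs of distinct classes, and let $g:E\to\mathbb{R}$. Then the following are equivalent: (a) there exist a finite alphabet $\mathcal{U}=[k]$, a probability table $\{\mathbf{p}_u\}_{u\in\mathcal{U}}$ with every $\mathbf{p}_u\in(0,1)^n$ and $\sum_i p_u^{(i)}=1$, and a probability distribution $d$ on $\mathcal{U}$ such that $f_d(e)=g(e)$ for all $e\in E$; (b) there exists a point $x$ in the interior $\mathrm{Co}(\mathcal{H_R})$ of the linear ordering polytope such that $x(e)=g(e)$ for all $e\in E$.
   Context: Situational opinions: for $u\in\mathcal{U}$ and distinct $i,j$, $f_u(C^{(i)},C^{(j)})=p_u^{(i)}/(p_u^{(i)}+p_u^{(j)})$. Overall opinions (expert graph edge-weights): $f_d(e)=\sum_{u\in\mathcal{U}}d(u)f_u(e)$. Rankings: for a permutation $r=(r_1,\dots,r_n)$ of $[n]$, the ranking graph has weights $f_r(C^{(r_a)},C^{(r_b)})=1$ if $a<b$ and $0$ if $a>b$. Identify any weighting $x$ of ordered pairs satisfying $x(C^{(j)},C^{(i)})=1-x(C^{(i)},C^{(j)})$ with the vector $(x(C^{(i)},C^{(j)}))_{i<j}\in\mathbb{R}^{n(n-1)/2}$. The linear ordering polytope is the convex hull of the $n!$ vectors $f_r$; $\mathrm{Co}(\mathcal{H_R})$ denotes its (open) interior in $\mathbb{R}^{n(n-1)/2}$, i.e. the open convex hull of the ranking vectors. *)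

theory Defs
  imports "HOL-Analysis.Analysis"
begin

text \<open>Classes are the elements of a finite linearly ordered type 'c
(C^(1) < ... < C^(n) with n = CARD('c)). A weighting of the ordered pairs
with x(j,i) = 1 - x(i,j) is identified with its coordinates x(i,j), i<j.
We realise R^(n(n-1)/2) as the coordinate subspace pair_space of
real^('c \<times> 'c) whose coordinates off {(i,j). i<j} vanish.\<close>

definition pair_space :: "(real ^ ('c::{finite,linorder} \<times> 'c)) set" where
  "pair_space = {v. \<forall>i j. \<not> i < j \<longrightarrow> v $ (i, j) = 0}"

definition pair_weight :: "real ^ ('c::{finite,linorder} \<times> 'c) \<Rightarrow> 'c \<times> 'c \<Rightarrow> real" where
  "pair_weight v e = (if fst e < snd e then v $ e else 1 - v $ (snd e, fst e))"

text \<open>Ranking vector: pos c is the (0-based) rank position of class c, a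
bijection onto {0..<n}; f_r(C,C') = 1 iff C is ranked before C'.\<close>
definition ranking_vec :: "('c::{finite,linorder} \<Rightarrow> nat) \<Rightarrow> real ^ ('c \<times> 'c)" where
  "ranking_vec pos = (\<chi> e. if fst e < snd e then (if pos (fst e) < pos (snd e) then 1 else 0) else 0)"

definition ranking_vecs :: "(real ^ ('c::{finite,linorder} \<times> 'c)) set" where
  "ranking_vecs = {ranking_vec pos | pos. bij_betw pos (UNIV :: 'c set) {0..<CARD('c)}}"

definition linear_ordering_polytope :: "(real ^ ('c::{finite,linorder} \<times> 'c)) set" where
  "linear_ordering_polytope = convex hull ranking_vecs"

definition Co_HR :: "(real ^ ('c::{finite,linorder} \<times> 'c)) set" where
  "Co_HR = (top_of_set pair_space) interior_of linear_ordering_polytope"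

definition overall_opinion ::
  "nat \<Rightarrow> (nat \<Rightarrow> 'c \<Rightarrow> real) \<Rightarrow> (nat \<Rightarrow> real) \<Rightarrow> 'c \<times> 'c \<Rightarrow> real" where
  "overall_opinion k p d e = (\<Sum>u<k. d u * (p u (fst e) / (p u (fst e) + p u (snd e))))"

end

(* The Bradley-Terry vectors x(i,j) = p_i / (p_i + p_j), p > 0, are the situational
   opinions, and overall opinions are their finite mixtures.  A Bradley-Terry vector is the
   vector of pairwise marginals of the Plackett-Luce distribution on rankings (the next class
   is drawn with probability proportional to p among those not yet ranked), which charges
   every ranking; hence it lies in the relative interior of the linear ordering polytope,
   and so do its mixtures.  The ranking vectors affinely span the coordinate space, so this
   relative interior is Co(H_R).  Conversely, the weights p_i = t ^ pos(i) make the
   Bradley-Terry vectors converge to the ranking vector of pos as t -> 0, so the convex hull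
   of the Bradley-Terry vectors is dense in the polytope.  A convex set and its closure have
   the same relative interior, hence Co(H_R) is exactly this convex hull. *)

theory Submission
  imports Defs
begin

lemma convex_hull_UN_convex_hull:
  "convex hull (\<Union>i\<in>I. convex hull (A i)) = convex hull (\<Union>i\<in>I. A i)"
proof (rule antisym)
  have "(\<Union>i\<in>I. convex hull (A i)) \<subseteq> convex hull (\<Union>i\<in>I. A i)"
    by (intro UN_least hull_mono) auto
  then show "convex hull (\<Union>i\<in>I. convex hull (A i)) \<subseteq> convex hull (\<Union>i\<in>I. A i)"
    by (intro hull_minimal convex_convex_hull)
  show "convex hull (\<Union>i\<in>I. A i) \<subseteq> convex hull (\<Union>i\<in>I. convex hull (A i))"
    by (intro hull_mono UN_mono hull_subset) auto
qed

lemma convex_hull_image_indexed: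
  fixes f :: "'a \<Rightarrow> 'b::real_vector"
  shows "x \<in> convex hull (f ` A) \<longleftrightarrow>
     (\<exists>k (u :: nat \<Rightarrow> real) a. (\<forall>i<k. 0 \<le> u i \<and> a i \<in> A) \<and> (\<Sum>i<k. u i) = 1 \<and>
        x = (\<Sum>i<k. u i *\<^sub>R f (a i)))"
    (is "_ \<longleftrightarrow> ?combination")
proof
  assume "x \<in> convex hull (f ` A)"
  then obtain k :: nat and u y where uy: "\<forall>i\<in>{1..k}. 0 \<le> u i \<and> y i \<in> f ` A"
    and "sum u {1..k} = 1" and "(\<Sum>i = 1..k. u i *\<^sub>R y i) = x"
    unfolding convex_hull_indexed by blast
  moreover have "\<forall>i\<in>{1..k}. \<exists>a. a \<in> A \<and> y i = f a"
    using uy by (simp add: image_iff Bex_def)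
  then have "\<exists>a. \<forall>i\<in>{1..k}. a i \<in> A \<and> y i = f (a i)"
    by (rule bchoice)
  then obtain a where "\<forall>i\<in>{1..k}. a i \<in> A \<and> y i = f (a i)"
    by blast
  ultimately show ?combination
    by (intro exI[of _ k] exI[of _ "\<lambda>i. u (Suc i)"] exI[of _ "\<lambda>i. a (Suc i)"])
      (auto simp: sum.atLeast1_atMost_eq)
next
  assume ?combination
  then obtain k and u :: "nat \<Rightarrow> real" and a where ua: "\<forall>i<k. 0 \<le> u i \<and> a i \<in> A"
    and u_sum: "(\<Sum>i<k. u i) = 1" and x: "x = (\<Sum>i<k. u i *\<^sub>R f (a i))"
    by blast
  show "x \<in> convex hull (f ` A)"
    unfolding x by (intro convex_sum convex_convex_hull finite_lessThan)
      (use ua u_sum in \<open>auto intro: hull_inc\<close>)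
qed

lemma tendsto_power_share:
  fixes x :: "nat \<Rightarrow> real"
  assumes "\<And>m. 0 < x m" and "x \<longlonglongrightarrow> 0" and "a \<noteq> b"
  shows "(\<lambda>m. x m ^ a / (x m ^ a + x m ^ b)) \<longlonglongrightarrow> (if a < b then 1 else 0)"
proof -
  have to_one: "(\<lambda>m. x m ^ a / (x m ^ a + x m ^ b)) \<longlonglongrightarrow> 1" if "a < b" for a b
  proof -
    have "x m ^ a / (x m ^ a + x m ^ b) = 1 / (1 + x m ^ (b - a))" for m
    proof -
      have "x m ^ a + x m ^ b = x m ^ a * (1 + x m ^ (b - a))"
        using \<open>a < b\<close> by (simp add: distrib_left flip: power_add)
      then show ?thesis
        using assms(1)[of m] by (simp add: add_pos_pos)
    qed
    moreover have "(\<lambda>m. x m ^ (b - a)) \<longlonglongrightarrow> 0"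
      using assms(2) \<open>a < b\<close> by simp
    then have "(\<lambda>m. 1 / (1 + x m ^ (b - a))) \<longlonglongrightarrow> 1 / (1 + 0)"
      by (intro tendsto_divide tendsto_add tendsto_const) auto
    ultimately show ?thesis by simp
  qed
  show ?thesis
  proof (cases "a < b")
    case True
    then show ?thesis using to_one by simp
  next
    case False
    then have "b < a" using assms(3) by simp
    have "x m ^ a / (x m ^ a + x m ^ b) = 1 - x m ^ b / (x m ^ b + x m ^ a)" for m
    proof -
      have "0 < x m ^ a + x m ^ b"
        using assms(1)[of m] by (simp add: add_pos_pos)
      then show ?thesis
        by (simp add: field_simps)
    qed
    then show ?thesis
      using tendsto_diff[OF tendsto_const to_one[OF \<open>b < a\<close>], of 1] False by simp
  qed
qed

definition pair_vec :: "('c::{finite,linorder} \<Rightarrow> 'c \<Rightarrow> real) \<Rightarrow> real ^ ('c \<times> 'c)" where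
  "pair_vec f = (\<chi> e. if fst e < snd e then f (fst e) (snd e) else 0)"

lemma pair_vec_cong:
  "(\<And>i j. i < j \<Longrightarrow> f i j = g i j) \<Longrightarrow> pair_vec f = pair_vec g"
  by (simp add: pair_vec_def vec_eq_iff)

lemma pair_vec_sum:
  "(\<Sum>a\<in>A. c a *\<^sub>R pair_vec (f a)) = pair_vec (\<lambda>i j. \<Sum>a\<in>A. c a * f a i j)"
  by (simp add: pair_vec_def vec_eq_iff sum_component sum.neutral)

lemma pair_weight_pair_vec:
  assumes "i \<noteq> j" and "f j i = 1 - f i j"
  shows "pair_weight (pair_vec f) (i, j) = f i j"
  using assms by (auto simp: pair_weight_def pair_vec_def)

lemma tendsto_pair_vec:
  assumes "\<And>i j. i < j \<Longrightarrow> ((\<lambda>m. f m i j) \<longlongrightarrow> g i j) F"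
  shows "((\<lambda>m. pair_vec (f m)) \<longlongrightarrow> pair_vec g) F"
  by (rule vec_tendstoI) (simp add: pair_vec_def assms)

lemma ranking_vec_eq_pair_vec:
  "ranking_vec pos = pair_vec (\<lambda>i j. if pos i < pos j then 1 else 0)"
  by (simp add: ranking_vec_def pair_vec_def)

lemma ranking_vecs_eq: "ranking_vecs = {ranking_vec pos | pos :: 'c::{finite,linorder} \<Rightarrow> nat. inj pos}"
proof -
  have "ranking_vec pos \<in> ranking_vecs" if "inj pos" for pos :: "'c \<Rightarrow> nat"
  proof -
    define r where "r c = card {c'. pos c' < pos c}" for c
    have r_less_iff: "r a < r b \<longleftrightarrow> pos a < pos b" for a b
    proof
      show "pos a < pos b \<Longrightarrow> r a < r b"
        unfolding r_def by (rule psubset_card_mono) auto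
      show "pos a < pos b" if "r a < r b"
      proof (rule ccontr)
        assume "\<not> pos a < pos b"
        then have "r b \<le> r a"
          unfolding r_def by (intro card_mono) auto
        with \<open>r a < r b\<close> show False by simp
      qed
    qed
    have "inj r"
    proof (rule injI)
      fix a b assume "r a = r b"
      then have "pos a = pos b"
        using r_less_iff[of a b] r_less_iff[of b a] by auto
      with \<open>inj pos\<close> show "a = b" by (simp add: inj_eq)
    qed
    moreover have "r c < CARD('c)" for c
      unfolding r_def by (rule psubset_card_mono) auto
    then have "range r \<subseteq> {0..<CARD('c)}" by auto
    ultimately have "bij_betw r UNIV {0..<CARD('c)}"
      by (simp add: bij_betw_def card_image card_subset_eq)
    moreover have "ranking_vec r = ranking_vec pos"
      unfolding ranking_vec_def by (simp only: r_less_iff)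
    ultimately show ?thesis
      unfolding ranking_vecs_def by (intro CollectI exI[of _ r]) simp
  qed
  then show ?thesis
    unfolding ranking_vecs_def bij_betw_def by blast
qed

lemma finite_ranking_vecs: "finite (ranking_vecs :: (real ^ ('c::{finite,linorder} \<times> 'c)) set)"
proof -
  have "ranking_vecs \<subseteq> range (\<lambda>R :: 'c \<Rightarrow> 'c \<Rightarrow> bool. pair_vec (\<lambda>i j. if R i j then 1 else 0))"
    unfolding ranking_vecs_eq ranking_vec_eq_pair_vec by (force intro: range_eqI)
  then show ?thesis
    by (rule finite_subset) simp
qed

lemma zero_in_ranking_vecs: "0 \<in> (ranking_vecs :: (real ^ ('c::{finite,linorder} \<times> 'c)) set)"
proof -
  define pos where "pos c = card {c' :: 'c. c < c'}" for c
  have pos_antimono: "pos b < pos a" if "a < b" for a b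
    unfolding pos_def using that by (intro psubset_card_mono) auto
  then have "inj pos"
    by (metis injI less_irrefl linorder_neqE)
  then have "ranking_vec pos \<in> ranking_vecs"
    unfolding ranking_vecs_eq by blast
  moreover have "ranking_vec pos = 0"
    by (auto simp: ranking_vec_def vec_eq_iff dest: pos_antimono)
  ultimately show ?thesis by simp
qed

lemma axis_in_span_ranking_vecs:
  fixes i j :: "'c::{finite,linorder}"
  assumes "i < j"
  shows "axis (i, j) 1 \<in> span ranking_vecs"
proof -
  \<comment> \<open>two rankings with i and j in the first two places, differing only in their order\<close>
  define pos where "pos c = (if c = i then 0 else if c = j then 1 else Suc (Suc (to_nat c)))" for c
  define pos' where "pos' c = (if c = i then 1 else if c = j then 0 else Suc (Suc (to_nat c)))" for c
  have "inj pos" "inj pos'"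
    unfolding pos_def pos'_def inj_def using assms by (auto split: if_splits)
  then have "ranking_vec pos - ranking_vec pos' \<in> span ranking_vecs"
    unfolding ranking_vecs_eq by (intro span_diff span_base) auto
  moreover have "ranking_vec pos - ranking_vec pos' = axis (i, j) 1"
    using assms by (auto simp: vec_eq_iff ranking_vec_def axis_def pos_def pos'_def)
  ultimately show ?thesis by simp
qed

lemma affine_hull_ranking_vecs:
  "affine hull (ranking_vecs :: (real ^ ('c::{finite,linorder} \<times> 'c)) set) = pair_space"
proof -
  let ?R = "ranking_vecs :: (real ^ ('c \<times> 'c)) set"
  have "affine hull ?R = span ?R"
    by (intro affine_hull_span_0 hull_inc zero_in_ranking_vecs)
  moreover have "span ?R \<subseteq> pair_space"
    by (rule span_minimal) (auto simp: ranking_vecs_def ranking_vec_def pair_space_def subspace_def)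
  moreover have "pair_space \<subseteq> span ?R"
  proof
    fix v :: "real ^ ('c \<times> 'c)"
    assume "v \<in> pair_space"
    have "v $ e *s axis e 1 \<in> span ?R" for e
    proof (cases e)
      case (Pair a b)
      then show ?thesis
        using \<open>v \<in> pair_space\<close> axis_in_span_ranking_vecs[of a b]
        by (cases "a < b") (auto simp: pair_space_def scalar_mult_eq_scaleR intro: span_mul span_zero)
    qed
    then have "(\<Sum>e\<in>UNIV. v $ e *s axis e 1) \<in> span ?R"
      by (intro span_sum) auto
    then show "v \<in> span ?R"
      by (simp add: basis_expansion)
  qed
  ultimately show ?thesis by blast
qed

lemma Co_HR_eq_rel_interior: "Co_HR = rel_interior linear_ordering_polytope"
  unfolding Co_HR_def rel_interior_def interior_of_def linear_ordering_polytope_def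
    affine_hull_convex_hull affine_hull_ranking_vecs ..

definition bradley_terry :: "('c \<Rightarrow> real) \<Rightarrow> 'c \<Rightarrow> 'c \<Rightarrow> real" where
  "bradley_terry p i j = p i / (p i + p j)"

lemma bradley_terry_swap:
  assumes "0 < p i" and "0 < p j"
  shows "bradley_terry p j i = 1 - bradley_terry p i j"
  using assms by (simp add: bradley_terry_def field_simps)

lemma bradley_terry_divide:
  "c \<noteq> 0 \<Longrightarrow> bradley_terry (\<lambda>i. w i / c) = bradley_terry w"
  by (simp add: bradley_terry_def fun_eq_iff add_divide_distrib[symmetric])

definition positive_distributions :: "('c::finite \<Rightarrow> real) set" where
  "positive_distributions = {p. (\<forall>i. 0 < p i \<and> p i < 1) \<and> sum p UNIV = 1}"

lemma normalize_in_positive_distributions: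
  fixes w :: "'c::finite \<Rightarrow> real"
  assumes "\<forall>i. 0 < w i" and "CARD('c) \<ge> 2"
  shows "(\<lambda>i. w i / sum w UNIV) \<in> positive_distributions"
proof -
  have "w i < sum w UNIV" for i
  proof -
    have "\<not> UNIV \<subseteq> {i}"
    proof
      assume "UNIV \<subseteq> {i}"
      then have "CARD('c) \<le> card {i}"
        by (intro card_mono) auto
      with assms(2) show False by simp
    qed
    then have "UNIV - {i} \<noteq> {}" by auto
    then have "0 < sum w (UNIV - {i})"
      using assms(1) by (intro sum_pos) auto
    then show ?thesis
      by (simp add: sum.remove[of UNIV i])
  qed
  moreover have "0 < sum w UNIV"
    using assms(1) by (intro sum_pos) auto
  ultimately show ?thesis
    using assms(1) by (simp add: positive_distributions_def sum_divide_distrib[symmetric])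
qed

definition ranked_before :: "'c set \<Rightarrow> ('c \<Rightarrow> nat) \<Rightarrow> 'c \<Rightarrow> 'c \<Rightarrow> bool" where
  "ranked_before S q i j \<longleftrightarrow> i \<in> S \<and> (j \<notin> S \<or> q i < q j)"

(* The probability that i precedes j in a Plackett-Luce random ranking with weights p,
   conditioned on the top positions being filled by S in increasing order of q. *)
definition plackett_luce_pref :: "'c set \<Rightarrow> ('c \<Rightarrow> nat) \<Rightarrow> ('c \<Rightarrow> real) \<Rightarrow> 'c \<Rightarrow> 'c \<Rightarrow> real" where
  "plackett_luce_pref S q p i j =
     (if ranked_before S q i j then 1 else if ranked_before S q j i then 0 else bradley_terry p i j)"

definition rankings_extending ::
  "'c::{finite,linorder} set \<Rightarrow> ('c \<Rightarrow> nat) \<Rightarrow> (real ^ ('c \<times> 'c)) set" where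
  "rankings_extending S q =
     {ranking_vec pos | pos. inj pos \<and> (\<forall>i j. ranked_before S q i j \<longrightarrow> pos i < pos j)}"

lemma ranked_before_insert:
  assumes "a \<notin> S" and "\<forall>s\<in>S. q s < m"
  shows "ranked_before (insert a S) (q(a := m)) i j \<longleftrightarrow>
           ranked_before S q i j \<or> (i = a \<and> j \<notin> insert a S)"
  using assms by (auto simp: ranked_before_def)

lemma plackett_luce_pref_insert:
  assumes "a \<notin> S" and "\<forall>s\<in>S. q s < m" and "i \<noteq> j"
  shows "plackett_luce_pref (insert a S) (q(a := m)) p i j =
           (if a = i \<and> j \<notin> S then 1 else if a = j \<and> i \<notin> S then 0 else plackett_luce_pref S q p i j)"
  using assms by (auto simp: plackett_luce_pref_def ranked_before_insert) (auto simp: ranked_before_def)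

lemma plackett_luce_pref_recursion:
  fixes S :: "'c::finite set"
  assumes "\<forall>c. 0 < p c" and "\<forall>s\<in>S. q s < m" and "i \<noteq> j"
  shows "(\<Sum>a\<in>-S. p a * plackett_luce_pref (insert a S) (q(a := m)) p i j) =
           sum p (-S) * plackett_luce_pref S q p i j"
proof (cases "i \<in> S \<or> j \<in> S")
  case True
  then have "(\<Sum>a\<in>-S. p a * plackett_luce_pref (insert a S) (q(a := m)) p i j) =
               (\<Sum>a\<in>-S. p a * plackett_luce_pref S q p i j)"
    using assms by (intro sum.cong) (auto simp: plackett_luce_pref_insert)
  then show ?thesis
    by (simp add: sum_distrib_right)
next
  case False
  define B where "B = bradley_terry p i j"
  have "plackett_luce_pref S q p i j = B"
    using False by (simp add: plackett_luce_pref_def ranked_before_def B_def)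
  moreover have "B * (p i + p j) = p i"
    using assms(1) add_pos_pos[of "p i" "p j"] by (simp add: B_def bradley_terry_def)
  moreover have "sum f (-S) = f i + f j + sum f (-S - {i, j})" for f :: "'c \<Rightarrow> real"
    using False assms(3) sum.remove[of "-S" i f] sum.remove[of "-S - {i}" j f]
    by (simp add: Diff_insert2[symmetric] insert_commute)
  ultimately show ?thesis
    using assms False by (simp add: plackett_luce_pref_insert sum_distrib_left algebra_simps)
qed

(* The class ranked next is a with probability p a / sum p (-S). *)
lemma plackett_luce_vec_recursion:
  fixes S :: "'c::{finite,linorder} set"
  assumes "\<forall>c. 0 < p c" and "-S \<noteq> {}" and "\<forall>s\<in>S. q s < m"
  shows "pair_vec (plackett_luce_pref S q p) =
           (\<Sum>a\<in>-S. (p a / sum p (-S)) *\<^sub>R pair_vec (plackett_luce_pref (insert a S) (q(a := m)) p))"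
proof -
  have "sum p (-S) > 0"
    using assms(1,2) by (intro sum_pos) auto
  then show ?thesis
    unfolding pair_vec_sum
    using plackett_luce_pref_recursion[OF assms(1,3)]
    by (intro pair_vec_cong) (simp add: sum_divide_distrib[symmetric])
qed

lemma rankings_extending_UNIV:
  fixes q :: "'c::{finite,linorder} \<Rightarrow> nat"
  assumes "inj q"
  shows "rankings_extending UNIV q = {ranking_vec q}"
proof -
  have same: "ranking_vec pos = ranking_vec q"
    if pos_less: "\<forall>i j. q i < q j \<longrightarrow> pos i < pos j" for pos :: "'c \<Rightarrow> nat"
  proof -
    have "pos i < pos j \<longleftrightarrow> q i < q j" if "i < j" for i j
    proof -
      have "q i \<noteq> q j"
        using \<open>inj q\<close> \<open>i < j\<close> by (auto simp: inj_eq)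
      then show ?thesis
        using pos_less[rule_format, of i j] pos_less[rule_format, of j i]
        by (meson less_asym linorder_neqE_nat)
    qed
    then show ?thesis
      by (simp add: ranking_vec_def vec_eq_iff)
  qed
  have "rankings_extending UNIV q \<subseteq> {ranking_vec q}"
  proof
    fix v
    assume "v \<in> rankings_extending UNIV q"
    then obtain pos where "v = ranking_vec pos" and "\<forall>i j. q i < q j \<longrightarrow> pos i < pos j"
      unfolding rankings_extending_def ranked_before_def by blast
    then show "v \<in> {ranking_vec q}"
      using same by blast
  qed
  moreover have "ranking_vec q \<in> rankings_extending UNIV q"
    using assms unfolding rankings_extending_def ranked_before_def by blast
  ultimately show ?thesis by blast
qed

lemma plackett_luce_vec_UNIV:
  fixes q :: "'c::{finite,linorder} \<Rightarrow> nat"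
  assumes "inj q"
  shows "pair_vec (plackett_luce_pref UNIV q p) = ranking_vec q"
  unfolding ranking_vec_eq_pair_vec using assms
  by (intro pair_vec_cong) (auto simp: plackett_luce_pref_def ranked_before_def inj_eq)

lemma rankings_extending_eq_Union:
  assumes "-S \<noteq> {}" and "\<forall>s\<in>S. q s < m"
  shows "rankings_extending S q = (\<Union>a\<in>-S. rankings_extending (insert a S) (q(a := m)))"
proof
  show "(\<Union>a\<in>-S. rankings_extending (insert a S) (q(a := m))) \<subseteq> rankings_extending S q"
  proof (intro UN_least subsetI)
    fix a v
    assume "a \<in> -S" and "v \<in> rankings_extending (insert a S) (q(a := m))"
    then obtain pos where "v = ranking_vec pos" and "inj pos"
      and "\<forall>i j. ranked_before (insert a S) (q(a := m)) i j \<longrightarrow> pos i < pos j"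
      unfolding rankings_extending_def by blast
    with \<open>a \<in> -S\<close> assms(2) show "v \<in> rankings_extending S q"
      unfolding rankings_extending_def by (auto simp: ranked_before_insert)
  qed
  show "rankings_extending S q \<subseteq> (\<Union>a\<in>-S. rankings_extending (insert a S) (q(a := m)))"
  proof
    fix v
    assume "v \<in> rankings_extending S q"
    then obtain pos where v: "v = ranking_vec pos" and "inj pos"
      and pos_less: "\<forall>i j. ranked_before S q i j \<longrightarrow> pos i < pos j"
      by (auto simp: rankings_extending_def)
    obtain a where "a \<in> -S" and a_min: "\<And>b. b \<in> -S \<Longrightarrow> pos a \<le> pos b"
      using assms(1) ex_has_least_nat[of "\<lambda>c. c \<in> -S" _ pos] by blast
    have "pos i < pos j" if "ranked_before (insert a S) (q(a := m)) i j" for i j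
      using that pos_less a_min[of j] \<open>inj pos\<close> \<open>a \<in> -S\<close> assms(2)
      by (auto simp: ranked_before_insert inj_eq order_le_neq_trans)
    with \<open>inj pos\<close> \<open>a \<in> -S\<close> show "v \<in> (\<Union>a\<in>-S. rankings_extending (insert a S) (q(a := m)))"
      unfolding v rankings_extending_def by blast
  qed
qed

lemma plackett_luce_vec_in_rel_interior:
  fixes S :: "'c::{finite,linorder} set"
  assumes "\<forall>c. 0 < p c" and "inj_on q S"
  shows "pair_vec (plackett_luce_pref S q p) \<in> rel_interior (convex hull rankings_extending S q)"
  using assms(2)
proof (induction "card (-S)" arbitrary: S q)
  case 0
  then have "-S = {}" by simp
  then have "S = UNIV" by blast
  with 0 show ?case
    by (simp add: rankings_extending_UNIV plackett_luce_vec_UNIV)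
next
  case (Suc k)
  then have "-S \<noteq> {}" by auto
  obtain m where m: "\<forall>s\<in>S. q s < m"
    using finite_nat_set_iff_bounded[of "q ` S"] by auto
  define C where "C a = convex hull rankings_extending (insert a S) (q(a := m))" for a
  define y where "y a = pair_vec (plackett_luce_pref (insert a S) (q(a := m)) p)" for a
  have y: "y a \<in> rel_interior (C a)" if "a \<in> -S" for a
    unfolding y_def C_def
  proof (rule Suc.hyps)
    show "k = card (- insert a S)"
      using Suc.hyps(2) that by (simp add: Compl_insert card_Diff_singleton)
    show "inj_on (q(a := m)) (insert a S)"
      using Suc.prems m that by (auto simp: inj_on_def)
  qed
  have "convex hull rankings_extending S q = convex hull (\<Union>a\<in>-S. C a)"
    unfolding C_def convex_hull_UN_convex_hull rankings_extending_eq_Union[OF \<open>-S \<noteq> {}\<close> m] ..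
  moreover have "rel_interior (convex hull (\<Union>a\<in>-S. C a)) =
      {\<Sum>a\<in>-S. c a *\<^sub>R s a | c s. (\<forall>a\<in>-S. c a > 0) \<and> sum c (-S) = 1 \<and> (\<forall>a\<in>-S. s a \<in> rel_interior (C a))}"
  proof (rule rel_interior_convex_hull_union)
    show "\<forall>a\<in>-S. convex (C a) \<and> C a \<noteq> {}"
      using y rel_interior_subset unfolding C_def by fastforce
  qed simp
  moreover have "pair_vec (plackett_luce_pref S q p) = (\<Sum>a\<in>-S. (p a / sum p (-S)) *\<^sub>R y a)"
    unfolding y_def by (rule plackett_luce_vec_recursion[OF assms(1) \<open>-S \<noteq> {}\<close> m])
  moreover have "sum p (-S) > 0"
    using assms(1) \<open>-S \<noteq> {}\<close> by (intro sum_pos) auto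
  ultimately show ?case
    using assms(1) y by (force simp: sum_divide_distrib[symmetric])
qed

lemma bradley_terry_in_Co_HR:
  fixes p :: "'c::{finite,linorder} \<Rightarrow> real"
  assumes "\<forall>c. 0 < p c"
  shows "pair_vec (bradley_terry p) \<in> Co_HR"
proof -
  let ?q = "\<lambda>_ :: 'c. 0 :: nat"
  have "plackett_luce_pref {} ?q p = bradley_terry p"
    by (simp add: fun_eq_iff plackett_luce_pref_def ranked_before_def)
  moreover have "rankings_extending {} ?q = ranking_vecs"
    by (simp add: rankings_extending_def ranked_before_def ranking_vecs_eq)
  ultimately show ?thesis
    using plackett_luce_vec_in_rel_interior[OF assms, where S = "{}" and q = ?q]
    by (simp add: Co_HR_eq_rel_interior linear_ordering_polytope_def)
qed

lemma pair_weight_bradley_terry_mixture: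
  assumes "\<forall>u<k. \<forall>c. 0 < p u c" and "(\<Sum>u<k. d u) = 1" and "i \<noteq> j"
  shows "pair_weight (\<Sum>u<k. d u *\<^sub>R pair_vec (bradley_terry (p u))) (i, j) = overall_opinion k p d (i, j)"
proof -
  have "d u * bradley_terry (p u) j i = d u - d u * bradley_terry (p u) i j" if "u < k" for u
    using bradley_terry_swap[of "p u" i j] assms(1) that by (simp add: right_diff_distrib)
  then have "(\<Sum>u<k. d u * bradley_terry (p u) j i) = (\<Sum>u<k. d u - d u * bradley_terry (p u) i j)"
    by (intro sum.cong) simp_all
  also have "\<dots> = 1 - (\<Sum>u<k. d u * bradley_terry (p u) i j)"
    by (simp add: sum_subtractf assms(2))
  finally show ?thesis
    unfolding pair_vec_sum using assms(3)
    by (simp add: pair_weight_pair_vec overall_opinion_def bradley_terry_def)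
qed

lemma ranking_vecs_subset_closure_bradley_terry:
  assumes "CARD('c::{finite,linorder}) \<ge> 2"
  shows "ranking_vecs \<subseteq> closure ((\<lambda>p. pair_vec (bradley_terry p)) ` (positive_distributions :: ('c \<Rightarrow> real) set))"
proof
  fix v :: "real ^ ('c \<times> 'c)"
  assume "v \<in> ranking_vecs"
  then obtain pos where "inj pos" and v: "v = ranking_vec pos"
    unfolding ranking_vecs_eq by blast
  define w where "w m c = ((1 / 2 :: real) ^ m) ^ pos c" for m c
  have w_pos: "\<forall>c. 0 < w m c" for m
    by (simp add: w_def)
  have "pair_vec (bradley_terry (w m)) \<in> (\<lambda>p. pair_vec (bradley_terry p)) ` positive_distributions" for m
  proof -
    have "sum (w m) UNIV > 0"
      using w_pos[of m] by (intro sum_pos) auto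
    then have "sum (w m) UNIV \<noteq> 0" by simp
    then have "bradley_terry (w m) = bradley_terry (\<lambda>c. w m c / sum (w m) UNIV)"
      by (simp add: bradley_terry_divide)
    then show ?thesis
      using normalize_in_positive_distributions[OF w_pos[of m] assms] by (intro image_eqI) simp_all
  qed
  moreover have "(\<lambda>m. pair_vec (bradley_terry (w m))) \<longlonglongrightarrow> v"
    unfolding v ranking_vec_eq_pair_vec
  proof (rule tendsto_pair_vec)
    fix i j :: 'c
    assume "i < j"
    then have "pos i \<noteq> pos j"
      using \<open>inj pos\<close> by (auto simp: inj_eq)
    then show "(\<lambda>m. bradley_terry (w m) i j) \<longlonglongrightarrow> (if pos i < pos j then 1 else 0)"
      unfolding bradley_terry_def w_def by (intro tendsto_power_share LIMSEQ_power_zero) auto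
  qed
  ultimately show "v \<in> closure ((\<lambda>p. pair_vec (bradley_terry p)) ` positive_distributions)"
    unfolding closure_sequential by (intro exI[of _ "\<lambda>m. pair_vec (bradley_terry (w m))"]) simp
qed

lemma Co_HR_eq_convex_hull_bradley_terry:
  assumes "CARD('c::{finite,linorder}) \<ge> 2"
  shows "Co_HR = convex hull ((\<lambda>p. pair_vec (bradley_terry p)) ` (positive_distributions :: ('c \<Rightarrow> real) set))"
proof -
  let ?B = "(\<lambda>p. pair_vec (bradley_terry p)) ` (positive_distributions :: ('c \<Rightarrow> real) set)"
  let ?P = "linear_ordering_polytope :: (real ^ ('c \<times> 'c)) set"
  have "?B \<subseteq> rel_interior ?P"
    using bradley_terry_in_Co_HR by (auto simp: positive_distributions_def Co_HR_eq_rel_interior)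
  then have hull_sub: "convex hull ?B \<subseteq> rel_interior ?P"
    by (intro hull_minimal convex_rel_interior) (simp_all add: linear_ordering_polytope_def)
  have "closure (convex hull ?B) = ?P"
  proof
    have "closed ?P"
      unfolding linear_ordering_polytope_def
      by (intro compact_imp_closed compact_convex_hull finite_imp_compact finite_ranking_vecs)
    then show "closure (convex hull ?B) \<subseteq> ?P"
      using hull_sub rel_interior_subset by (intro closure_minimal) auto
    have "ranking_vecs \<subseteq> closure (convex hull ?B)"
      using ranking_vecs_subset_closure_bradley_terry[OF assms] closure_mono[OF hull_subset] by blast
    then show "?P \<subseteq> closure (convex hull ?B)"
      unfolding linear_ordering_polytope_def by (intro hull_minimal convex_closure convex_convex_hull)
  qed
  then have "rel_interior ?P = rel_interior (convex hull ?B)"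
    using convex_rel_interior_closure[of "convex hull ?B"] by simp
  then show ?thesis
    using hull_sub rel_interior_subset[of "convex hull ?B"] unfolding Co_HR_eq_rel_interior by blast
qed

lemma Co_HR_realizes_iff_mixture_realizes:
  fixes E :: "('c::{finite,linorder} \<times> 'c) set"
  assumes "CARD('c) \<ge> 2" and "E \<subseteq> {(i, j). i \<noteq> j}"
  shows "(\<exists>x\<in>Co_HR. \<forall>e\<in>E. pair_weight x e = g e) \<longleftrightarrow>
    (\<exists>k p (d :: nat \<Rightarrow> real). (\<forall>u<k. p u \<in> positive_distributions) \<and> (\<forall>u<k. 0 \<le> d u) \<and>
       (\<Sum>u<k. d u) = 1 \<and> (\<forall>e\<in>E. overall_opinion k p d e = g e))"
  (is "_ \<longleftrightarrow> ?mixtures_agree")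
proof -
  let ?mixture = "\<lambda>k p d. \<Sum>u<k. d u *\<^sub>R pair_vec (bradley_terry (p u :: 'c \<Rightarrow> real))"
  have opinion: "pair_weight (?mixture k p d) e = overall_opinion k p d e"
    if "\<forall>u<k. p u \<in> positive_distributions" and "(\<Sum>u<k. d u) = 1" and "e \<in> E" for k p d e
    using pair_weight_bradley_terry_mixture[of k p d "fst e" "snd e"] that assms(2)
    by (auto simp: positive_distributions_def)
  have "(\<exists>x\<in>Co_HR. \<forall>e\<in>E. pair_weight x e = g e) \<longleftrightarrow>
    (\<exists>k p (d :: nat \<Rightarrow> real). (\<forall>u<k. p u \<in> positive_distributions) \<and> (\<forall>u<k. 0 \<le> d u) \<and>
       (\<Sum>u<k. d u) = 1 \<and> (\<forall>e\<in>E. pair_weight (?mixture k p d) e = g e))"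
    unfolding Co_HR_eq_convex_hull_bradley_terry[OF assms(1)] Bex_def convex_hull_image_indexed
    by blast
  also have "\<dots> \<longleftrightarrow> ?mixtures_agree"
    by (intro ex_cong1 conj_cong refl) (auto simp: opinion)
  finally show ?thesis .
qed

theorem theorem1:
  fixes E :: "('c::{finite,linorder} \<times> 'c) set"
    and g :: "'c \<times> 'c \<Rightarrow> real"
  assumes "CARD('c) \<ge> 2"
    and "E \<subseteq> {(i, j). i \<noteq> j}"
  shows "(\<exists>k (p :: nat \<Rightarrow> 'c \<Rightarrow> real) (d :: nat \<Rightarrow> real).
            (\<forall>u<k. (\<forall>i. 0 < p u i \<and> p u i < 1) \<and> (\<Sum>i\<in>UNIV. p u i) = 1) \<and>
            (\<forall>u<k. 0 \<le> d u) \<and> (\<Sum>u<k. d u) = 1 \<and>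
            (\<forall>e\<in>E. overall_opinion k p d e = g e))
     \<longleftrightarrow> (\<exists>x\<in>Co_HR. \<forall>e\<in>E. pair_weight x e = g e)"
  unfolding Co_HR_realizes_iff_mixture_realizes[OF assms] positive_distributions_def by simp

end
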